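(* Let $k\ge1$ and let $p=(p_1,\dots,p_n)$ be a parking function. Then the permutation $\pi(p)$ avoids the pattern $12\cdots(k+1)$ if and only if the word $p_1\cdots p_n$ contains no weakly increasing subsequence of length $k+1$, i.e. there are no indices $i_1<\dots<i_{k+1}$ with $p_{i_1}\le p_{i_2}\le\dots\le p_{i_{k+1}}$.
   Context: $[n]=\{1,\dots,n\}$. A tuple $p\in[n]^n$ is a parking function if its weakly increasing rearrangement $(p'_1,\dots,p'_n)$ satisfies $p'_i\le i$ for all $i$. $\pi(p)$ is the permutation obtained by listing, for $s=1,\dots,n$ in turn, the indices $j$ with $p_j=s$ in increasing order, and concatenating. A permutation avoids $\sigma\in\mathfrak S_m$ if none of its length-$m$ subsequences is order-isomorphic to $\sigma$. *)

theory Defs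
  imports Main
begin

text \<open>Words/tuples are lists; entries are 1-based values, positions of the tuple
  p = (p_1,...,p_n) are the list positions 0..n-1 (position j-1 holds p_j).\<close>

definition parking_function :: "nat list \<Rightarrow> bool" where
  "parking_function p \<longleftrightarrow> set p \<subseteq> {1..length p} \<and>
     (\<forall>i < length p. sort p ! i \<le> i + 1)"

definition pf_perm :: "nat list \<Rightarrow> nat list" where
  "pf_perm p = concat (map (\<lambda>s. filter (\<lambda>j. p ! (j - 1) = s) [1..<length p + 1])
                             [1..<length p + 1])"

definition contains_pattern :: "nat list \<Rightarrow> nat list \<Rightarrow> bool" where
  "contains_pattern w \<sigma> \<longleftrightarrow> (\<exists>idx :: nat \<Rightarrow> nat.
      (\<forall>a b. a < b \<and> b < length \<sigma> \<longrightarrow> idx a < idx b) \<and>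
      (\<forall>a < length \<sigma>. idx a < length w) \<and>
      (\<forall>a < length \<sigma>. \<forall>b < length \<sigma>. (w ! idx a < w ! idx b \<longleftrightarrow> \<sigma> ! a < \<sigma> ! b)))"

definition avoids :: "nat list \<Rightarrow> nat list \<Rightarrow> bool" where
  "avoids w \<sigma> \<longleftrightarrow> \<not> contains_pattern w \<sigma>"

definition has_weakly_incr_subseq :: "nat list \<Rightarrow> nat \<Rightarrow> bool" where
  "has_weakly_incr_subseq w m \<longleftrightarrow> (\<exists>idx :: nat \<Rightarrow> nat.
      (\<forall>a b. a < b \<and> b < m \<longrightarrow> idx a < idx b) \<and>
      (\<forall>a < m. idx a < length w) \<and>
      (\<forall>a b. a < b \<and> b < m \<longrightarrow> w ! idx a \<le> w ! idx b))"

end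

theory Submission
  imports Defs
begin

text \<open>Reading \<open>\<pi>(p)\<close> from left to right lists the positions \<open>j\<close> in increasing
  lexicographic order of the pairs \<open>(p\<^sub>j, j)\<close>. Hence a subsequence of \<open>\<pi>(p)\<close> is
  increasing exactly when its entries \<open>j\<^sub>1 < \<dots> < j\<^sub>m\<close> are also lexicographically
  increasing in \<open>(p\<^sub>j, j)\<close>, i.e. when \<open>p\<^sub>j\<^sub>1 \<le> \<dots> \<le> p\<^sub>j\<^sub>m\<close>. Since every
  position of a parking function occurs in \<open>\<pi>(p)\<close>, this matches increasing subsequences
  of \<open>\<pi>(p)\<close> with weakly increasing subsequences of \<open>p\<close>, and a word contains
  \<open>12\<cdots>m\<close> iff it has an increasing subsequence of length \<open>m\<close>.\<close>

lemma contains_pattern_increasing_iff: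
  "contains_pattern w [1..<m + 1] \<longleftrightarrow> (\<exists>idx :: nat \<Rightarrow> nat.
      (\<forall>a b. a < b \<and> b < m \<longrightarrow> idx a < idx b) \<and>
      (\<forall>a < m. idx a < length w) \<and>
      (\<forall>a b. a < b \<and> b < m \<longrightarrow> w ! idx a < w ! idx b))"
proof -
  have "(\<forall>a < m. \<forall>b < m. x a < x b \<longleftrightarrow> [1..<m + 1] ! a < [1..<m + 1] ! b) \<longleftrightarrow>
        (\<forall>a b. a < b \<and> b < m \<longrightarrow> x a < x b)" for x :: "nat \<Rightarrow> nat"
    by (auto simp: nth_upt simp del: upt_Suc) (metis less_asym not_less_iff_gr_or_eq)
  then show ?thesis
    unfolding contains_pattern_def length_upt by simp
qed

text \<open>Asymmetry of \<open>R\<close> is what forces the positions in \<open>q\<close> of such a chain to increase.\<close>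

lemma increasing_subseq_iff_chain:
  fixes q :: "'a :: linorder list"
  assumes sorted: "sorted_wrt R q" and asym: "asymp R"
  shows "(\<exists>idx :: nat \<Rightarrow> nat.
            (\<forall>a b. a < b \<and> b < m \<longrightarrow> idx a < idx b) \<and>
            (\<forall>a < m. idx a < length q) \<and>
            (\<forall>a b. a < b \<and> b < m \<longrightarrow> q ! idx a < q ! idx b))
       \<longleftrightarrow> (\<exists>f :: nat \<Rightarrow> 'a.
            (\<forall>a < m. f a \<in> set q) \<and>
            (\<forall>a b. a < b \<and> b < m \<longrightarrow> f a < f b \<and> R (f a) (f b)))"
proof
  assume "\<exists>idx. (\<forall>a b. a < b \<and> b < m \<longrightarrow> idx a < idx b) \<and> (\<forall>a < m. idx a < length q) \<and>
                (\<forall>a b. a < b \<and> b < m \<longrightarrow> q ! idx a < q ! idx b)"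
  then obtain idx where mono: "\<forall>a b. a < b \<and> b < m \<longrightarrow> idx a < idx b"
    and bound: "\<forall>a < m. idx a < length q"
    and incr: "\<forall>a b. a < b \<and> b < m \<longrightarrow> q ! idx a < q ! idx b"
    by blast
  have "R (q ! idx a) (q ! idx b)" if "a < b" "b < m" for a b
    using sorted mono bound that unfolding sorted_wrt_iff_nth_less by auto
  with bound incr show "\<exists>f. (\<forall>a < m. f a \<in> set q) \<and>
                          (\<forall>a b. a < b \<and> b < m \<longrightarrow> f a < f b \<and> R (f a) (f b))"
    by (intro exI[of _ "\<lambda>a. q ! idx a"]) auto
next
  assume "\<exists>f. (\<forall>a < m. f a \<in> set q) \<and> (\<forall>a b. a < b \<and> b < m \<longrightarrow> f a < f b \<and> R (f a) (f b))"
  then obtain f where mem: "\<forall>a < m. f a \<in> set q"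
    and chain: "\<forall>a b. a < b \<and> b < m \<longrightarrow> f a < f b \<and> R (f a) (f b)"
    by blast
  have "\<forall>a. \<exists>i. a < m \<longrightarrow> i < length q \<and> q ! i = f a"
    using mem by (metis in_set_conv_nth)
  then obtain idx where idx: "\<And>a. a < m \<Longrightarrow> idx a < length q \<and> q ! idx a = f a"
    by metis
  have "idx a < idx b" if ab: "a < b" "b < m" for a b
  proof (rule ccontr)
    assume "\<not> idx a < idx b"
    then consider "idx b < idx a" | "idx a = idx b" by linarith
    then show False
    proof cases
      case 1
      then have "R (f b) (f a)"
        using sorted idx[of a] idx[of b] ab unfolding sorted_wrt_iff_nth_less by (metis less_trans)
      then show False using chain ab asym by (meson asympD)
    next
      case 2
      then have "f a = f b" using idx[of a] idx[of b] ab by auto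
      then show False using chain ab by fastforce
    qed
  qed
  with idx chain show "\<exists>idx. (\<forall>a b. a < b \<and> b < m \<longrightarrow> idx a < idx b) \<and>
                          (\<forall>a < m. idx a < length q) \<and>
                          (\<forall>a b. a < b \<and> b < m \<longrightarrow> q ! idx a < q ! idx b)"
    by (intro exI[of _ idx]) auto
qed

definition pf_before :: "nat list \<Rightarrow> nat \<Rightarrow> nat \<Rightarrow> bool" where
  "pf_before p j j' \<longleftrightarrow> p ! (j - 1) < p ! (j' - 1) \<or> (p ! (j - 1) = p ! (j' - 1) \<and> j < j')"

lemma asymp_pf_before: "asymp (pf_before p)"
  by (rule asympI) (auto simp: pf_before_def)

lemma pf_before_iff_le:
  "j < j' \<Longrightarrow> pf_before p j j' \<longleftrightarrow> p ! (j - 1) \<le> p ! (j' - 1)"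
  by (auto simp: pf_before_def)

lemma sorted_wrt_pf_before_blocks:
  "sorted_wrt (<) ss \<Longrightarrow>
   sorted_wrt (pf_before p) (concat (map (\<lambda>s. filter (\<lambda>j. p ! (j - 1) = s) [1..<n]) ss))"
proof (induction ss)
  case Nil
  then show ?case by simp
next
  case (Cons s ss)
  have "sorted_wrt (pf_before p) (filter (\<lambda>j. p ! (j - 1) = s) [1..<n])"
    by (rule sorted_wrt_mono_rel[of _ "(<)"]) (auto simp: pf_before_def sorted_wrt_filter)
  moreover have "pf_before p x y"
    if "x \<in> set (filter (\<lambda>j. p ! (j - 1) = s) [1..<n])"
       "y \<in> set (concat (map (\<lambda>s. filter (\<lambda>j. p ! (j - 1) = s) [1..<n]) ss))" for x y
    using that Cons.prems by (auto simp: pf_before_def)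
  ultimately show ?case
    using Cons by (simp add: sorted_wrt_append)
qed

lemma sorted_wrt_pf_perm: "sorted_wrt (pf_before p) (pf_perm p)"
  unfolding pf_perm_def by (rule sorted_wrt_pf_before_blocks) (simp del: upt_Suc)

lemma set_pf_perm:
  assumes "set p \<subseteq> {1..length p}"
  shows "set (pf_perm p) = {1..length p}"
proof -
  have "p ! (j - 1) \<in> {1..length p}" if "j \<in> {1..length p}" for j
  proof -
    from that have "j - 1 < length p" by auto
    then show ?thesis using assms nth_mem by blast
  qed
  then show ?thesis
    unfolding pf_perm_def by (auto simp del: upt_Suc) (meson le_imp_less_Suc)
qed

text \<open>The entries of \<open>\<pi>(p)\<close> are 1-based positions, hence the shift by one.\<close>

lemma pf_before_chain_iff_weakly_incr_subseq:
  "(\<exists>f :: nat \<Rightarrow> nat. (\<forall>a < m. f a \<in> {1..length p}) \<and>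
      (\<forall>a b. a < b \<and> b < m \<longrightarrow> f a < f b \<and> pf_before p (f a) (f b)))
   \<longleftrightarrow> has_weakly_incr_subseq p m"
proof
  assume "\<exists>f. (\<forall>a < m. f a \<in> {1..length p}) \<and>
              (\<forall>a b. a < b \<and> b < m \<longrightarrow> f a < f b \<and> pf_before p (f a) (f b))"
  then obtain f where range: "\<forall>a < m. f a \<in> {1..length p}"
    and chain: "\<forall>a b. a < b \<and> b < m \<longrightarrow> f a < f b \<and> pf_before p (f a) (f b)"
    by blast
  have "f a - 1 < f b - 1" if "a < b" "b < m" for a b
  proof -
    have "1 \<le> f a" "f a < f b" using range chain that by auto
    then show ?thesis by linarith
  qed
  moreover have "f a - 1 < length p" if "a < m" for a
  proof -
    have "1 \<le> f a" "f a \<le> length p" using range that by auto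
    then show ?thesis by linarith
  qed
  moreover have "p ! (f a - 1) \<le> p ! (f b - 1)" if "a < b" "b < m" for a b
    using chain that pf_before_iff_le by blast
  ultimately show "has_weakly_incr_subseq p m"
    unfolding has_weakly_incr_subseq_def by (intro exI[of _ "\<lambda>a. f a - 1"]) blast
next
  assume "has_weakly_incr_subseq p m"
  then obtain idx where "\<forall>a b. a < b \<and> b < m \<longrightarrow> idx a < idx b"
    and "\<forall>a < m. idx a < length p"
    and "\<forall>a b. a < b \<and> b < m \<longrightarrow> p ! idx a \<le> p ! idx b"
    unfolding has_weakly_incr_subseq_def by blast
  then show "\<exists>f. (\<forall>a < m. f a \<in> {1..length p}) \<and>
                 (\<forall>a b. a < b \<and> b < m \<longrightarrow> f a < f b \<and> pf_before p (f a) (f b))"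
    by (intro exI[of _ "\<lambda>a. Suc (idx a)"]) (auto simp: pf_before_iff_le)
qed

theorem corollary2p11:
  fixes k :: nat and p :: "nat list"
  assumes "k \<ge> 1" and "parking_function p"
  shows "avoids (pf_perm p) [1..<k + 2] \<longleftrightarrow> \<not> has_weakly_incr_subseq p (k + 1)"
proof -
  have "set p \<subseteq> {1..length p}"
    using assms(2) unfolding parking_function_def by blast
  then have positions: "set (pf_perm p) = {1..length p}"
    by (rule set_pf_perm)
  have "contains_pattern (pf_perm p) [1..<(k + 1) + 1] \<longleftrightarrow> has_weakly_incr_subseq p (k + 1)"
    unfolding contains_pattern_increasing_iff
      increasing_subseq_iff_chain[OF sorted_wrt_pf_perm asymp_pf_before] positions
    by (rule pf_before_chain_iff_weakly_incr_subseq)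
  then show ?thesis
    unfolding avoids_def by (simp add: numeral_2_eq_2)
qed

end
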